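(* Let $\mathbf a\in L^\infty((0,T)\times\mathbb R^N;\mathbb R^N)$. Let $p=(p_1,\dots,p_N)$ and $q=(q_1,\dots,q_N)$ with $p_i,q_i\in\mathrm{Lip}_{loc}([0,T]\times\mathbb R^N)$ satisfying $\partial_tp_i+\mathbf a\cdot\nabla p_i=0$ and $\partial_tq_i+\mathbf a\cdot\nabla q_i=0$ a.e. in $(0,T)\times\mathbb R^N$, and $p_i(T,\cdot)=q_i(T,\cdot)$ for all $i$. Assume $J(p),J(q)\in\mathcal V^T$ (this holds in particular if $J(p)\ge0$ and $J(q)\ge0$). Then $J(p)=J(q)$ almost everywhere in $(0,T)\times\mathbb R^N$.
   Context: $J(p)=\det(\nabla p_1,\dots,\nabla p_N)$ with spatial gradients. $\mathcal W^T$ denotes the set of $\pi\in C([0,T],L^\infty_{loc}(\mathbb R^N)\text{ weak-*})$ which satisfy $\partial_t\pi+\operatorname{div}(\mathbf a\pi)=0$ in the sense of distributions on $(0,T)\times\mathbb R^N$. $\mathcal E^T$ is the set of real-valued $p\in\mathrm{Lip}_{loc}([0,T]\times\mathbb R^N)$ with $\partial_tp+\mathbf a\cdot\nabla p=0$ a.e. in $(0,T)\times\mathbb R^N$ and $p(T,\cdot)=0$; $V^T_e=\bigcup_{p\in\mathcal E^T}\{(t,x)\in(0,T)\times\mathbb R^N: p(t,x)\neq0\}$; $\mathcal V^T=\{\pi\in\mathcal W^T:\pi=0\text{ a.e. in }V^T_e\}$. *)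

theory Defs
  imports "HOL-Analysis.Analysis"
begin

text \<open>Space-time points are pairs (t,x) in real \<times> real^'n; N = CARD('n).
  Functions on space-time are written curried, f t x.\<close>

abbreviation ucur :: "(real \<Rightarrow> 'b \<Rightarrow> 'c) \<Rightarrow> real \<times> 'b \<Rightarrow> 'c" where
  "ucur f \<equiv> (\<lambda>z. f (fst z) (snd z))"

abbreviation ST :: "real \<Rightarrow> (real \<times> (real^'n)) set" where
  "ST T \<equiv> {0<..<T} \<times> UNIV"

definition dT :: "(real \<Rightarrow> real^'n \<Rightarrow> real) \<Rightarrow> real \<Rightarrow> real^'n \<Rightarrow> real" where
  "dT p t x = frechet_derivative (ucur p) (at (t, x)) (1, 0)"

definition grad :: "(real \<Rightarrow> real^'n \<Rightarrow> real) \<Rightarrow> real \<Rightarrow> real^'n \<Rightarrow> real^'n" where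
  "grad p t x = (\<chi> j. frechet_derivative (ucur p) (at (t, x)) (0, axis j 1))"

definition Jac :: "('n::finite \<Rightarrow> real \<Rightarrow> real^'n \<Rightarrow> real) \<Rightarrow> real \<Rightarrow> real^'n \<Rightarrow> real" where
  "Jac p t x = det (\<chi> i. grad (p i) t x)"

definition Linf_field :: "real \<Rightarrow> (real \<Rightarrow> real^'n \<Rightarrow> real^'n) \<Rightarrow> bool" where
  "Linf_field T a \<longleftrightarrow> set_borel_measurable lebesgue (ST T) (ucur a) \<and>
     (\<exists>M. AE z in lebesgue. z \<in> ST T \<longrightarrow> norm (ucur a z) \<le> M)"

definition Lip_loc :: "real \<Rightarrow> (real \<Rightarrow> real^'n \<Rightarrow> real) \<Rightarrow> bool" where
  "Lip_loc T p \<longleftrightarrow> (\<forall>K. compact K \<and> K \<subseteq> {0..T} \<times> UNIV \<longrightarrow> (\<exists>C. C-lipschitz_on K (ucur p)))"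

definition transport_ae :: "real \<Rightarrow> (real \<Rightarrow> real^'n \<Rightarrow> real^'n) \<Rightarrow> (real \<Rightarrow> real^'n \<Rightarrow> real) \<Rightarrow> bool" where
  "transport_ae T a p \<longleftrightarrow> (AE z in lebesgue. z \<in> ST T \<longrightarrow>
      ucur p differentiable (at z) \<and> dT p (fst z) (snd z) + a (fst z) (snd z) \<bullet> grad p (fst z) (snd z) = 0)"

definition smooth_fun :: "('a::real_normed_vector \<Rightarrow> real) \<Rightarrow> bool" where
  "smooth_fun f \<longleftrightarrow> (\<exists>F. f \<in> F \<and> (\<forall>g\<in>F. (\<forall>z. g differentiable (at z)) \<and>
      (\<forall>v. (\<lambda>z. frechet_derivative g (at z) v) \<in> F)))"

definition test_fun :: "real \<Rightarrow> (real \<Rightarrow> real^'n \<Rightarrow> real) \<Rightarrow> bool" where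
  "test_fun T \<phi> \<longleftrightarrow> smooth_fun (ucur \<phi>) \<and> compact (closure {z. ucur \<phi> z \<noteq> 0}) \<and>
     closure {z. ucur \<phi> z \<noteq> 0} \<subseteq> ST T"

definition Linf_loc :: "(real^'n \<Rightarrow> real) \<Rightarrow> bool" where
  "Linf_loc f \<longleftrightarrow> f \<in> borel_measurable lebesgue \<and>
     (\<forall>K. compact K \<longrightarrow> (\<exists>M. AE x in lebesgue. x \<in> K \<longrightarrow> \<bar>f x\<bar> \<le> M))"

text \<open>W^T: pi in C([0,T], L^\<infinity>_loc weak-* ) (weak-* continuity tested against L^1 functions
  of bounded support), (jointly measurable on (0,T) \<times> R^N), solving
  \<partial>_t pi + div(a pi) = 0 in the sense of distributions.\<close>
definition W_set :: "real \<Rightarrow> (real \<Rightarrow> real^'n \<Rightarrow> real^'n) \<Rightarrow> (real \<Rightarrow> real^'n \<Rightarrow> real) set" where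
  "W_set T a = {\<pi>.
     (\<forall>t\<in>{0..T}. Linf_loc (\<pi> t)) \<and>
     (\<forall>\<psi>::real^'n \<Rightarrow> real. integrable lebesgue \<psi> \<and> bounded {x. \<psi> x \<noteq> 0} \<longrightarrow>
        continuous_on {0..T} (\<lambda>t. LINT x|lebesgue. \<pi> t x * \<psi> x)) \<and>
     set_borel_measurable lebesgue (ST T) (ucur \<pi>) \<and>
     (\<forall>\<phi>. test_fun T \<phi> \<longrightarrow>
        (LINT z|lebesgue. ucur \<pi> z * (dT \<phi> (fst z) (snd z) + a (fst z) (snd z) \<bullet> grad \<phi> (fst z) (snd z))) = 0)}"

definition E_set :: "real \<Rightarrow> (real \<Rightarrow> real^'n \<Rightarrow> real^'n) \<Rightarrow> (real \<Rightarrow> real^'n \<Rightarrow> real) set" where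
  "E_set T a = {p. Lip_loc T p \<and> transport_ae T a p \<and> (\<forall>x. p T x = 0)}"

definition Ve :: "real \<Rightarrow> (real \<Rightarrow> real^'n \<Rightarrow> real^'n) \<Rightarrow> (real \<times> (real^'n)) set" where
  "Ve T a = (\<Union>p\<in>E_set T a. {z \<in> ST T. ucur p z \<noteq> 0})"

definition V_set :: "real \<Rightarrow> (real \<Rightarrow> real^'n \<Rightarrow> real^'n) \<Rightarrow> (real \<Rightarrow> real^'n \<Rightarrow> real) set" where
  "V_set T a = {\<pi> \<in> W_set T a. AE z in lebesgue. z \<in> Ve T a \<longrightarrow> ucur \<pi> z = 0}"

text \<open>A function defined a.e. on (0,T) \<times> R^N belongs to V^T if some element of V^T
  agrees with it a.e.\<close>
definition in_V :: "real \<Rightarrow> (real \<Rightarrow> real^'n \<Rightarrow> real^'n) \<Rightarrow> (real \<Rightarrow> real^'n \<Rightarrow> real) \<Rightarrow> bool" where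
  "in_V T a f \<longleftrightarrow> (\<exists>\<pi>\<in>V_set T a. AE z in lebesgue. z \<in> ST T \<longrightarrow> ucur \<pi> z = ucur f z)"

end

theory Submission
  imports Defs
begin

text \<open>Each difference \<open>p\<^sub>i - q\<^sub>i\<close> is a locally Lipschitz solution of the transport equation
  vanishing at \<open>t = T\<close>, i.e. an element of \<open>E\<^sup>T\<close>; hence \<open>p\<^sub>i = q\<^sub>i\<close> off \<open>V\<^sub>e\<^sup>T\<close>.
  A real function has zero derivative at almost every point of its zero set where it is
  differentiable: where the derivative is nonzero the zero set is tangent to a hyperplane, and
  such points have density zero. So \<open>\<nabla>p\<^sub>i = \<nabla>q\<^sub>i\<close>, and therefore \<open>J(p) = J(q)\<close>, a.e. off \<open>V\<^sub>e\<^sup>T\<close>;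
  on \<open>V\<^sub>e\<^sup>T\<close> both Jacobians vanish a.e. since they lie in \<open>V\<^sup>T\<close>.\<close>

definition flat_at :: "'a::real_inner set \<Rightarrow> 'a \<Rightarrow> 'a \<Rightarrow> bool" where
  "flat_at S x v \<longleftrightarrow>
     (\<forall>\<xi>>0. \<exists>e>0. \<forall>y\<in>S. y \<noteq> x \<and> norm (y - x) < e \<longrightarrow> \<bar>v \<bullet> (y - x)\<bar> < \<xi> * norm (y - x))"

lemma measure_unit_ball_slab_small:
  fixes v :: "'a::euclidean_space"
  assumes "v \<noteq> 0" and "e > 0"
  obtains \<xi> where "\<xi> > 0" and "measure lebesgue (ball 0 1 \<inter> {y. \<bar>v \<bullet> y\<bar> < \<xi>}) < e"
proof -
  define A where "A k = ball (0::'a) 1 \<inter> {y. \<bar>v \<bullet> y\<bar> < 1 / Suc k}" for k :: nat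
  have A_lmeasurable: "A k \<in> lmeasurable" for k
    unfolding A_def
    by (intro fmeasurable_Int_fmeasurable borel_open open_Collect_less continuous_intros) auto
  have "decseq A"
    unfolding A_def by (intro decseq_SucI) (auto simp: frac_le elim: less_le_trans)
  moreover have "range A \<subseteq> sets lebesgue"
    using A_lmeasurable by blast
  moreover have "emeasure lebesgue (A k) \<noteq> \<infinity>" for k
    by (metis A_lmeasurable fmeasurableD2 infinity_ennreal_def)
  ultimately have "(\<lambda>k. measure lebesgue (A k)) \<longlonglongrightarrow> measure lebesgue (\<Inter>k. A k)"
    by (intro Lim_measure_decseq)
  moreover have "(\<Inter>k. A k) \<subseteq> {y. v \<bullet> y = 0}"
  proof
    fix y assume y: "y \<in> (\<Inter>k. A k)"
    show "y \<in> {y. v \<bullet> y = 0}"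
    proof (rule ccontr)
      assume "y \<notin> {y. v \<bullet> y = 0}"
      then obtain k :: nat where "1 / Suc k < \<bar>v \<bullet> y\<bar>"
        using nat_approx_posE[of "\<bar>v \<bullet> y\<bar>"] by auto
      moreover have "y \<in> A k"
        using y by blast
      ultimately show False
        unfolding A_def by auto
    qed
  qed
  then have "measure lebesgue (\<Inter>k. A k) = 0"
    using negligible_hyperplane[of v 0] \<open>v \<noteq> 0\<close>
    by (meson negligible_imp_measure0 negligible_subset)
  ultimately obtain k where "measure lebesgue (A k) < e"
    using \<open>e > 0\<close> by (metis (lifting) eventually_sequentially order.refl order_tendstoD(2))
  then show thesis
    by (intro that[of "1 / Suc k"]) (auto simp: A_def)
qed

lemma measure_ball_slab:
  fixes x v :: "'a::euclidean_space"
  assumes "d > 0"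
  shows "measure lebesgue (ball x d \<inter> {y. \<bar>v \<bullet> (y - x)\<bar> < \<xi> * d}) =
         d ^ DIM('a) * measure lebesgue (ball 0 1 \<inter> {y. \<bar>v \<bullet> y\<bar> < \<xi>})"
proof -
  have "ball x d \<inter> {y. \<bar>v \<bullet> (y - x)\<bar> < \<xi> * d} =
        (\<lambda>y. d *\<^sub>R y + x) ` (ball 0 1 \<inter> {y. \<bar>v \<bullet> y\<bar> < \<xi>})"
  proof (intro equalityI subsetI)
    fix y assume "y \<in> ball x d \<inter> {y. \<bar>v \<bullet> (y - x)\<bar> < \<xi> * d}"
    with assms have "(1/d) *\<^sub>R (y - x) \<in> ball 0 1 \<inter> {y. \<bar>v \<bullet> y\<bar> < \<xi>}"
      by (auto simp: dist_norm norm_minus_commute abs_mult divide_less_eq)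
    moreover have "y = d *\<^sub>R ((1/d) *\<^sub>R (y - x)) + x"
      using assms by simp
    ultimately show "y \<in> (\<lambda>y. d *\<^sub>R y + x) ` (ball 0 1 \<inter> {y. \<bar>v \<bullet> y\<bar> < \<xi>})"
      by blast
  qed (use assms in \<open>auto simp: dist_norm abs_mult mult.commute\<close>)
  then show ?thesis
    using measure_lebesgue_affine[of d x] assms by simp
qed

lemma negligible_flat_points:
  fixes S :: "'a::euclidean_space set"
  shows "negligible {x \<in> S. \<exists>v. v \<noteq> 0 \<and> flat_at S x v}"
  unfolding negligible_eq_zero_density_alt
proof (intro ballI allI impI)
  fix x and e :: real
  assume "x \<in> {x \<in> S. \<exists>v. v \<noteq> 0 \<and> flat_at S x v}" and "e > 0"
  then obtain v where "v \<noteq> 0" and flat: "flat_at S x v"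
    by blast
  have "e * measure lebesgue (ball (0::'a) 1) > 0"
    using \<open>e > 0\<close> by (simp add: content_ball_pos)
  then obtain \<xi> where "\<xi> > 0"
    and slab_small: "measure lebesgue (ball 0 1 \<inter> {y. \<bar>v \<bullet> y\<bar> < \<xi>}) < e * measure lebesgue (ball (0::'a) 1)"
    using measure_unit_ball_slab_small[OF \<open>v \<noteq> 0\<close>] by blast
  then obtain r where "r > 0"
    and cone: "\<And>y. y \<in> S \<Longrightarrow> y \<noteq> x \<Longrightarrow> norm (y - x) < r \<Longrightarrow> \<bar>v \<bullet> (y - x)\<bar> < \<xi> * norm (y - x)"
    using flat unfolding flat_at_def by blast
  define d where "d = min r e"
  have "d > 0" "d \<le> e" "d \<le> r"
    using \<open>r > 0\<close> \<open>e > 0\<close> by (auto simp: d_def)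
  define U where "U = ball x d \<inter> {y. \<bar>v \<bullet> (y - x)\<bar> < \<xi> * d}"
  have "{x \<in> S. \<exists>v. v \<noteq> 0 \<and> flat_at S x v} \<inter> ball x d \<subseteq> U"
  proof (clarsimp simp: U_def dist_norm norm_minus_commute)
    fix y assume "y \<in> S" "norm (y - x) < d"
    then show "\<bar>v \<bullet> (y - x)\<bar> < \<xi> * d"
      using cone[of y] \<open>d \<le> r\<close> \<open>\<xi> > 0\<close> \<open>d > 0\<close>
      by (cases "y = x") (auto intro: less_le_trans)
  qed
  moreover have "U \<in> lmeasurable"
    unfolding U_def
    by (intro fmeasurable_Int_fmeasurable borel_open open_Collect_less continuous_intros) auto
  moreover have "measure lebesgue U < e * measure lebesgue (ball x d)"
  proof -
    have "measure lebesgue U = d ^ DIM('a) * measure lebesgue (ball 0 1 \<inter> {y. \<bar>v \<bullet> y\<bar> < \<xi>})"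
      unfolding U_def using \<open>d > 0\<close> by (rule measure_ball_slab)
    also have "\<dots> < d ^ DIM('a) * (e * measure lebesgue (ball (0::'a) 1))"
      using slab_small \<open>d > 0\<close> by simp
    also have "\<dots> = e * measure lebesgue (ball x d)"
      using content_ball_conv_unit_ball[of d x] \<open>d > 0\<close> by simp
    finally show ?thesis .
  qed
  ultimately show "\<exists>d U. 0 < d \<and> d \<le> e \<and> {x \<in> S. \<exists>v. v \<noteq> 0 \<and> flat_at S x v} \<inter> ball x d \<subseteq> U \<and>
      U \<in> lmeasurable \<and> measure lebesgue U < e * measure lebesgue (ball x d)"
    using \<open>d > 0\<close> \<open>d \<le> e\<close> by blast
qed

lemma flat_at_zero_set:
  fixes f :: "'a::euclidean_space \<Rightarrow> real"
  assumes deriv: "(f has_derivative f') (at x)" and "f x = 0"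
  shows "flat_at {y. f y = 0} x (adjoint f' 1)"
  unfolding flat_at_def
proof (intro allI impI)
  fix \<xi> :: real assume "\<xi> > 0"
  have f'_eq: "f' h = adjoint f' 1 \<bullet> h" for h
    using adjoint_works[of f' h 1] deriv by (simp add: has_derivative_linear inner_commute)
  obtain e where "e > 0"
    and approx: "\<And>y. norm (y - x) < e \<Longrightarrow> norm (f y - f x - f' (y - x)) \<le> \<xi>/2 * norm (y - x)"
    using deriv \<open>\<xi> > 0\<close> unfolding has_derivative_at_alt by (meson half_gt_zero)
  have "\<bar>adjoint f' 1 \<bullet> (y - x)\<bar> < \<xi> * norm (y - x)"
    if "f y = 0" "y \<noteq> x" "norm (y - x) < e" for y
  proof -
    have "\<bar>adjoint f' 1 \<bullet> (y - x)\<bar> \<le> \<xi>/2 * norm (y - x)"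
      using approx[of y] that \<open>f x = 0\<close> by (simp add: f'_eq)
    also have "\<dots> < \<xi> * norm (y - x)"
      using that \<open>\<xi> > 0\<close> by simp
    finally show ?thesis .
  qed
  with \<open>e > 0\<close> show "\<exists>e>0. \<forall>y\<in>{y. f y = 0}. y \<noteq> x \<and> norm (y - x) < e \<longrightarrow>
      \<bar>adjoint f' 1 \<bullet> (y - x)\<bar> < \<xi> * norm (y - x)"
    by blast
qed

lemma AE_frechet_derivative_eq_0_on_zero_set:
  fixes f :: "'a::euclidean_space \<Rightarrow> real"
  shows "AE x in lebesgue. f x = 0 \<longrightarrow> f differentiable (at x) \<longrightarrow> frechet_derivative f (at x) = (\<lambda>h. 0)"
proof -
  have "{x. f x = 0 \<and> f differentiable (at x) \<and> frechet_derivative f (at x) \<noteq> (\<lambda>h. 0)}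
      \<subseteq> {x \<in> {y. f y = 0}. \<exists>v. v \<noteq> 0 \<and> flat_at {y. f y = 0} x v}"
  proof
    fix x assume "x \<in> {x. f x = 0 \<and> f differentiable (at x) \<and> frechet_derivative f (at x) \<noteq> (\<lambda>h. 0)}"
    then have "f x = 0" "f differentiable (at x)" and nonzero: "frechet_derivative f (at x) \<noteq> (\<lambda>h. 0)"
      by auto
    then have deriv: "(f has_derivative frechet_derivative f (at x)) (at x)"
      by (simp add: frechet_derivative_works)
    then have "adjoint (frechet_derivative f (at x)) 1 \<noteq> 0"
      using nonzero adjoint_works[of "frechet_derivative f (at x)" _ 1]
      by (auto simp: has_derivative_linear fun_eq_iff)
    with flat_at_zero_set[OF deriv \<open>f x = 0\<close>] \<open>f x = 0\<close>
    show "x \<in> {x \<in> {y. f y = 0}. \<exists>v. v \<noteq> 0 \<and> flat_at {y. f y = 0} x v}"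
      by blast
  qed
  then have "{x. f x = 0 \<and> f differentiable (at x) \<and> frechet_derivative f (at x) \<noteq> (\<lambda>h. 0)} \<in> null_sets lebesgue"
    using negligible_flat_points negligible_subset negligible_iff_null_sets by blast
  then show ?thesis
    by (rule AE_not_in[THEN eventually_mono]) blast
qed

lemma frechet_derivative_diff:
  assumes "f differentiable (at z)" and "g differentiable (at z)"
  shows "frechet_derivative (\<lambda>z. f z - g z) (at z) =
         (\<lambda>h. frechet_derivative f (at z) h - frechet_derivative g (at z) h)"
  using assms by (intro frechet_derivative_at[symmetric] has_derivative_diff)
    (simp_all add: frechet_derivative_works[symmetric])

lemma dT_diff:
  assumes "ucur P differentiable (at (t, x))" and "ucur Q differentiable (at (t, x))"
  shows "dT (\<lambda>t x. P t x - Q t x) t x = dT P t x - dT Q t x"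
  using assms by (simp add: dT_def frechet_derivative_diff)

lemma grad_diff:
  assumes "ucur P differentiable (at (t, x))" and "ucur Q differentiable (at (t, x))"
  shows "grad (\<lambda>t x. P t x - Q t x) t x = grad P t x - grad Q t x"
  using assms by (simp add: grad_def frechet_derivative_diff vec_eq_iff)

lemma Lip_loc_diff:
  fixes p q :: "real \<Rightarrow> real^'n::finite \<Rightarrow> real"
  assumes "Lip_loc T p" and "Lip_loc T q"
  shows "Lip_loc T (\<lambda>t x. p t x - q t x)"
  unfolding Lip_loc_def
proof (intro allI impI)
  fix K :: "(real \<times> (real^'n)) set" assume "compact K \<and> K \<subseteq> {0..T} \<times> UNIV"
  then obtain C D where "C-lipschitz_on K (ucur p)" and "D-lipschitz_on K (ucur q)"
    using assms unfolding Lip_loc_def by blast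
  then have "(C + D)-lipschitz_on K (\<lambda>z. ucur p z - ucur q z)"
    by (rule lipschitz_on_diff)
  then show "\<exists>C. C-lipschitz_on K (ucur (\<lambda>t x. p t x - q t x))"
    by auto
qed

lemma transport_ae_diff:
  assumes "transport_ae T a p" and "transport_ae T a q"
  shows "transport_ae T a (\<lambda>t x. p t x - q t x)"
  using assms unfolding transport_ae_def
proof eventually_elim
  case (elim z)
  obtain t x where z: "z = (t, x)"
    by fastforce
  show ?case
    using elim by (auto simp: z differentiable_diff dT_diff grad_diff inner_diff_right)
qed

lemma AE_grad_eq_off_Ve:
  assumes "Lip_loc T p" "Lip_loc T q" "transport_ae T a p" "transport_ae T a q"
    and "\<And>x. p T x = q T x"
  shows "AE z in lebesgue. z \<in> ST T \<longrightarrow> z \<notin> Ve T a \<longrightarrow> grad p (fst z) (snd z) = grad q (fst z) (snd z)"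
proof -
  define f where "f = (\<lambda>t x. p t x - q t x)"
  have "f \<in> E_set T a"
    using assms by (simp add: E_set_def f_def Lip_loc_diff transport_ae_diff)
  then have f_zero: "ucur f z = 0" if "z \<in> ST T" "z \<notin> Ve T a" for z
    using that unfolding Ve_def by blast
  from assms(3,4) AE_frechet_derivative_eq_0_on_zero_set[of "ucur f"]
  show ?thesis
    unfolding transport_ae_def
  proof eventually_elim
    case (elim z)
    obtain t x where z: "z = (t, x)"
      by fastforce
    show ?case
    proof (intro impI)
      assume "z \<in> ST T" "z \<notin> Ve T a"
      with elim f_zero have "frechet_derivative (ucur f) (at z) = (\<lambda>h. 0)"
        by (simp add: f_def differentiable_diff)
      then have "grad f t x = 0"
        by (simp add: z grad_def vec_eq_iff)
      then show "grad p (fst z) (snd z) = grad q (fst z) (snd z)"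
        using elim \<open>z \<in> ST T\<close> by (simp add: z f_def grad_diff)
    qed
  qed
qed

lemma in_V_AE_eq_0_on_Ve:
  assumes "in_V T a f"
  shows "AE z in lebesgue. z \<in> Ve T a \<longrightarrow> ucur f z = 0"
proof -
  obtain \<pi> where "\<pi> \<in> V_set T a" and "AE z in lebesgue. z \<in> ST T \<longrightarrow> ucur \<pi> z = ucur f z"
    using assms unfolding in_V_def by blast
  moreover have "Ve T a \<subseteq> ST T"
    unfolding Ve_def by blast
  ultimately show ?thesis
    unfolding V_set_def by (auto elim!: eventually_mono[OF eventually_conj])
qed

theorem mainTheorem5:
  fixes T :: real
    and a :: "real \<Rightarrow> real^'n::finite \<Rightarrow> real^'n"
    and p q :: "'n \<Rightarrow> real \<Rightarrow> real^'n \<Rightarrow> real"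
  assumes "0 < T"
    and "Linf_field T a"
    and "\<And>i. Lip_loc T (p i)" and "\<And>i. Lip_loc T (q i)"
    and "\<And>i. transport_ae T a (p i)" and "\<And>i. transport_ae T a (q i)"
    and "\<And>i x. p i T x = q i T x"
    and "in_V T a (Jac p)" and "in_V T a (Jac q)"
  shows "AE z in lebesgue. z \<in> {0<..<T} \<times> UNIV \<longrightarrow> Jac p (fst z) (snd z) = Jac q (fst z) (snd z)"
proof -
  have "AE z in lebesgue. \<forall>i. z \<in> ST T \<longrightarrow> z \<notin> Ve T a \<longrightarrow>
      grad (p i) (fst z) (snd z) = grad (q i) (fst z) (snd z)"
    using assms(3-7) by (intro eventually_all_finite AE_grad_eq_off_Ve)
  moreover have "AE z in lebesgue. z \<in> Ve T a \<longrightarrow> Jac p (fst z) (snd z) = 0"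
    using assms(8) by (rule in_V_AE_eq_0_on_Ve)
  moreover have "AE z in lebesgue. z \<in> Ve T a \<longrightarrow> Jac q (fst z) (snd z) = 0"
    using assms(9) by (rule in_V_AE_eq_0_on_Ve)
  ultimately show ?thesis
    by eventually_elim (auto simp: Jac_def)
qed

end
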